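(* Let $N\ge1$ and $0<s<1$. There exists a constant $C^*>0$ such that $$\mathfrak{p}_t(z)\ge C^*t^{-\frac{N}{2s}}\quad\text{for all } t>1 \text{ and all } z\in\mathbb{R}^N \text{ with } |z|\le t^{1/2}.$$
   Context: For $t>0$ let $\mathfrak{h}^{(s)}_t$ be the heat kernel of $-(-\Delta)^s$ on $\mathbb{R}^N$; it satisfies, for some constant $C_0\ge1$, $C_0^{-1}\min\{t^{-N/(2s)},t|x|^{-N-2s}\}\le\mathfrak{h}^{(s)}_t(x)\le C_0\min\{t^{-N/(2s)},t|x|^{-N-2s}\}$ for all $x\in\mathbb{R}^N$, $t>0$. The heat kernel of $-\mathcal{L}$, $\mathcal{L}=-\Delta+(-\Delta)^s$, is $\mathfrak{p}_t(z)=(4\pi t)^{-N/2}\int_{\mathbb{R}^N}e^{-|z-\xi|^2/(4t)}\mathfrak{h}^{(s)}_t(\xi)\,d\xi$. *)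

theory Defs
  imports "HOL-Analysis.Analysis"
begin

text \<open>Heat kernel of the mixed operator, built from a kernel h (standing for the
fractional heat kernel h^(s)_t) by Gaussian convolution on R^N, N = CARD('n):
p_t(z) = (4 pi t)^(-N/2) * integral of exp(-|z-xi|^2/(4t)) h_t(xi) d xi.\<close>
definition mixed_heat_kernel :: "(real \<Rightarrow> real^'n \<Rightarrow> real) \<Rightarrow> real \<Rightarrow> real^'n \<Rightarrow> real" where
  "mixed_heat_kernel h t z =
     (4 * pi * t) powr (- real CARD('n) / 2) *
     (\<integral>\<xi>. exp (- (norm (z - \<xi>))\<^sup>2 / (4 * t)) * h t \<xi> \<partial>lborel)"

end

theory Submission
  imports Defs "HOL-Probability.Probability"
begin

text \<open>For \<open>t > 1\<close> and \<open>s < 1\<close> the parabolic ball \<open>|\<xi>| \<le> \<surd>t\<close> lies inside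
  \<open>|\<xi>| \<le> t^(1/(2s))\<close>, where the minimum in the two-sided bound for \<open>h\<^sub>t\<close> is
  \<open>t^(-N/(2s))\<close>; so \<open>h\<^sub>t \<ge> t^(-N/(2s))/C\<^sub>0\<close> there. For \<open>|z| \<le> \<surd>t\<close> the Gaussian factor
  is at least \<open>e\<^sup>-\<^sup>1\<close> on that ball, and the volume \<open>t^(N/2) |B\<^sub>1|\<close> of the ball cancels the
  normalisation \<open>(4\<pi>t)^(-N/2)\<close>.\<close>

lemma integrable_gaussian_real:
  fixes t c :: real
  assumes "t > 0"
  shows "integrable lborel (\<lambda>y::real. exp (- (c - y)\<^sup>2 / (4 * t)))"
proof -
  have "exp (- (c - y)\<^sup>2 / (4 * t)) = sqrt (2 * pi * (sqrt (2 * t))\<^sup>2) * normal_density c (sqrt (2 * t)) y"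
    for y using assms by (simp add: normal_density_def power2_commute[of c])
  moreover have "integrable lborel (\<lambda>y. sqrt (2 * pi * (sqrt (2 * t))\<^sup>2) * normal_density c (sqrt (2 * t)) y)"
    using assms by (intro integrable_mult_right integrable_normal_density) auto
  ultimately show ?thesis by simp
qed

lemma exp_norm_square_eq_prod:
  fixes z \<xi> :: "'a::euclidean_space" and t :: real
  shows "exp (- (norm (z - \<xi>))\<^sup>2 / (4 * t)) = (\<Prod>b\<in>Basis. exp (- (z \<bullet> b - \<xi> \<bullet> b)\<^sup>2 / (4 * t)))"
proof -
  have "(norm (z - \<xi>))\<^sup>2 = (z - \<xi>) \<bullet> (z - \<xi>)"
    by (simp add: power2_norm_eq_inner)
  also have "\<dots> = (\<Sum>b\<in>Basis. ((z - \<xi>) \<bullet> b) * ((z - \<xi>) \<bullet> b))"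
    by (rule euclidean_inner)
  finally have "- (norm (z - \<xi>))\<^sup>2 / (4 * t) = (\<Sum>b\<in>Basis. - (z \<bullet> b - \<xi> \<bullet> b)\<^sup>2 / (4 * t))"
    by (simp add: inner_diff_left power2_eq_square sum_divide_distrib sum_negf)
  then show ?thesis by (simp add: exp_sum)
qed

lemma integrable_gaussian:
  fixes t :: real and z :: "'a::euclidean_space"
  assumes "t > 0"
  shows "integrable lborel (\<lambda>\<xi>. exp (- (norm (z - \<xi>))\<^sup>2 / (4 * t)))"
proof (rule integrableI_bounded)
  have factor_finite: "(\<integral>\<^sup>+y. ennreal (exp (- (z \<bullet> b - y)\<^sup>2 / (4 * t))) \<partial>lborel) < \<infinity>" for b
    using integrable_gaussian_real[OF assms, of "z \<bullet> b"] by (subst nn_integral_eq_integral) auto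
  have "(\<integral>\<^sup>+\<xi>. ennreal (norm (exp (- (norm (z - \<xi>))\<^sup>2 / (4 * t)))) \<partial>lborel)
      = (\<integral>\<^sup>+\<xi>. (\<Prod>b\<in>Basis. ennreal (exp (- (z \<bullet> b - \<xi> \<bullet> b)\<^sup>2 / (4 * t)))) \<partial>lborel)"
    by (intro nn_integral_cong, subst exp_norm_square_eq_prod) (simp add: prod_ennreal prod_nonneg)
  also have "\<dots> = (\<Prod>b\<in>Basis. \<integral>\<^sup>+y. ennreal (exp (- (z \<bullet> b - y)\<^sup>2 / (4 * t))) \<partial>lborel)"
    by (rule nn_integral_lborel_prod) auto
  also have "\<dots> < \<infinity>"
    using factor_finite by (simp add: less_top[symmetric] ennreal_prod_eq_top)
  finally show "(\<integral>\<^sup>+\<xi>. ennreal (norm (exp (- (norm (z - \<xi>))\<^sup>2 / (4 * t)))) \<partial>lborel) < \<infinity>" .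
qed simp

lemma integrable_gaussian_mult_bounded:
  fixes t M :: real and z :: "'a::euclidean_space" and g :: "'a \<Rightarrow> real"
  assumes "t > 0" and [measurable]: "g \<in> borel_measurable lborel" and "\<And>\<xi>. \<bar>g \<xi>\<bar> \<le> M"
  shows "integrable lborel (\<lambda>\<xi>. exp (- (norm (z - \<xi>))\<^sup>2 / (4 * t)) * g \<xi>)"
proof (rule Bochner_Integration.integrable_bound)
  show "integrable lborel (\<lambda>\<xi>. M * exp (- (norm (z - \<xi>))\<^sup>2 / (4 * t)))"
    using integrable_gaussian[OF assms(1)] by (rule integrable_mult_right)
  show "AE \<xi> in lborel. norm (exp (- (norm (z - \<xi>))\<^sup>2 / (4 * t)) * g \<xi>)
                        \<le> norm (M * exp (- (norm (z - \<xi>))\<^sup>2 / (4 * t)))"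
    using assms(3) order_trans[OF abs_ge_zero assms(3)]
    by (intro AE_I2) (simp add: abs_mult mult.commute)
qed measurable

lemma gaussian_integral_ge_ball:
  fixes t r m M :: real and z :: "'a::euclidean_space" and g :: "'a \<Rightarrow> real"
  assumes "t > 0" and g_meas: "g \<in> borel_measurable lborel"
    and g_nonneg: "\<And>\<xi>. 0 \<le> g \<xi>" and g_le: "\<And>\<xi>. g \<xi> \<le> M"
    and g_ge: "\<And>\<xi>. norm \<xi> < r \<Longrightarrow> m \<le> g \<xi>" and z: "norm z \<le> r"
  shows "exp (- r\<^sup>2 / t) * m * measure lborel (ball (0::'a) r)
           \<le> (\<integral>\<xi>. exp (- (norm (z - \<xi>))\<^sup>2 / (4 * t)) * g \<xi> \<partial>lborel)"
proof -
  let ?G = "\<lambda>\<xi>. exp (- (norm (z - \<xi>))\<^sup>2 / (4 * t))"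
  have gauss_ge: "exp (- r\<^sup>2 / t) \<le> ?G \<xi>" if "norm \<xi> < r" for \<xi>
  proof -
    have "norm (z - \<xi>) \<le> 2 * r"
      using z that norm_triangle_ineq4[of z \<xi>] by linarith
    then have "(norm (z - \<xi>))\<^sup>2 \<le> 4 * r\<^sup>2"
      using power_mono[of "norm (z - \<xi>)" "2 * r" 2] by (simp add: power_mult_distrib)
    then show ?thesis
      using \<open>t > 0\<close> by (simp add: field_simps)
  qed
  have "(\<integral>\<xi>. indicator (ball (0::'a) r) \<xi> * (exp (- r\<^sup>2 / t) * m) \<partial>lborel)
          \<le> (\<integral>\<xi>. ?G \<xi> * g \<xi> \<partial>lborel)"
  proof (rule Bochner_Integration.integral_mono)
    show "integrable lborel (\<lambda>\<xi>. indicator (ball (0::'a) r) \<xi> * (exp (- r\<^sup>2 / t) * m))"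
      using emeasure_lborel_ball_finite[of "0::'a" r]
      by (intro integrable_mult_left integrable_real_indicator) simp_all
    show "integrable lborel (\<lambda>\<xi>. ?G \<xi> * g \<xi>)"
      using g_nonneg g_le by (intro integrable_gaussian_mult_bounded[OF \<open>t > 0\<close> g_meas]) auto
    show "indicator (ball (0::'a) r) \<xi> * (exp (- r\<^sup>2 / t) * m) \<le> ?G \<xi> * g \<xi>" for \<xi>
    proof (cases "norm \<xi> < r")
      case True
      have "exp (- r\<^sup>2 / t) * m \<le> ?G \<xi> * g \<xi>"
      proof (cases "m \<le> 0")
        case True
        then have "exp (- r\<^sup>2 / t) * m \<le> 0"
          by (simp add: mult_nonneg_nonpos)
        also have "0 \<le> ?G \<xi> * g \<xi>"
          using g_nonneg[of \<xi>] by simp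
        finally show ?thesis .
      next
        case False
        then show ?thesis
          using gauss_ge g_ge \<open>norm \<xi> < r\<close> by (intro mult_mono) auto
      qed
      with True show ?thesis by simp
    qed (simp add: g_nonneg)
  qed
  then show ?thesis by (simp add: mult_ac)
qed

lemma mixed_heat_kernel_ge_parabolic_ball:
  fixes h :: "real \<Rightarrow> real^'n \<Rightarrow> real" and t m M :: real and z :: "real^'n"
  assumes "t > 0" and "h t \<in> borel_measurable lborel"
    and "\<And>\<xi>. 0 \<le> h t \<xi>" and "\<And>\<xi>. h t \<xi> \<le> M"
    and "\<And>\<xi>. norm \<xi> \<le> sqrt t \<Longrightarrow> m \<le> h t \<xi>" and "norm z \<le> sqrt t"
  shows "(4 * pi) powr (- real CARD('n) / 2) * exp (-1) * measure lborel (ball (0::real^'n) 1) * m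
           \<le> mixed_heat_kernel h t z"
proof -
  let ?N = "real CARD('n)"
  have "sqrt t ^ CARD('n) = t powr (?N / 2)"
    using \<open>t > 0\<close> by (simp add: powr_half_sqrt[symmetric] powr_realpow[symmetric] powr_powr)
  then have ball_volume:
    "measure lborel (ball (0::real^'n) (sqrt t)) = t powr (?N / 2) * measure lborel (ball (0::real^'n) 1)"
    using \<open>t > 0\<close> by (subst content_ball_conv_unit_ball) auto
  have normalisation: "(4 * pi * t) powr (- ?N / 2) * t powr (?N / 2) = (4 * pi) powr (- ?N / 2)"
    using \<open>t > 0\<close> by (simp add: powr_mult powr_add[symmetric])
  have "(4 * pi) powr (- ?N / 2) * exp (-1) * measure lborel (ball (0::real^'n) 1) * m
      = (4 * pi * t) powr (- ?N / 2) * t powr (?N / 2) * exp (-1) * measure lborel (ball (0::real^'n) 1) * m"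
    by (simp only: normalisation)
  also have "\<dots> = (4 * pi * t) powr (- ?N / 2) *
                   (exp (- (sqrt t)\<^sup>2 / t) * m * measure lborel (ball (0::real^'n) (sqrt t)))"
    using \<open>t > 0\<close> by (simp add: ball_volume mult_ac)
  also have "\<dots> \<le> (4 * pi * t) powr (- ?N / 2) *
                   (\<integral>\<xi>. exp (- (norm (z - \<xi>))\<^sup>2 / (4 * t)) * h t \<xi> \<partial>lborel)"
    using assms by (intro mult_left_mono gaussian_integral_ge_ball) auto
  also have "\<dots> = mixed_heat_kernel h t z"
    by (simp add: mixed_heat_kernel_def)
  finally show ?thesis .
qed

text \<open>The profile \<open>min {t^(-N/(2s)), t |x|^(-N-2s)}\<close> of the fractional heat kernel; its value
  at \<open>x = 0\<close> is set explicitly because \<open>0 powr a = 0\<close> in Isabelle.\<close>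
definition frac_heat_profile :: "real \<Rightarrow> real \<Rightarrow> real \<Rightarrow> 'a::real_normed_vector \<Rightarrow> real" where
  "frac_heat_profile N s t x =
     (if x = 0 then t powr (- N / (2 * s))
      else min (t powr (- N / (2 * s))) (t * norm x powr (- N - 2 * s)))"

lemma frac_heat_profile_pos: "t > 0 \<Longrightarrow> 0 < frac_heat_profile N s t x"
  by (simp add: frac_heat_profile_def)

lemma frac_heat_profile_le: "frac_heat_profile N s t x \<le> t powr (- N / (2 * s))"
  by (simp add: frac_heat_profile_def)

lemma frac_heat_profile_eq_on_ball:
  assumes "0 < s" and "0 \<le> N" and "0 < t" and "norm x \<le> t powr (1 / (2 * s))"
  shows "frac_heat_profile N s t x = t powr (- N / (2 * s))"
proof (cases "x = 0")
  case False
  have "(t powr (1 / (2 * s))) powr (- N - 2 * s) = t powr (- N / (2 * s) - 1)"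
    using \<open>0 < s\<close> by (simp add: powr_powr field_simps)
  then have "t powr (- N / (2 * s)) = t * (t powr (1 / (2 * s))) powr (- N - 2 * s)"
    using \<open>0 < t\<close> by (simp add: powr_diff)
  also have "\<dots> \<le> t * norm x powr (- N - 2 * s)"
    using False assms by (intro mult_left_mono powr_mono2') auto
  finally show ?thesis
    using False by (simp add: frac_heat_profile_def)
qed (simp add: frac_heat_profile_def)

lemma sqrt_le_powr:
  assumes "1 \<le> t" and "0 < s" and "s \<le> 1"
  shows "sqrt t \<le> t powr (1 / (2 * s))"
proof -
  have "sqrt t = t powr (1 / 2)"
    using assms by (simp add: powr_half_sqrt)
  also have "\<dots> \<le> t powr (1 / (2 * s))"
    using assms by (intro powr_mono) (auto simp: field_simps)
  finally show ?thesis .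
qed

lemma kernel_bounds_from_frac_heat_profile:
  fixes k :: "'a::real_normed_vector \<Rightarrow> real"
  assumes "0 < s" and "s \<le> 1" and "0 \<le> N" and "1 \<le> t" and "0 < C0"
    and bounds: "\<And>x. frac_heat_profile N s t x / C0 \<le> k x \<and> k x \<le> C0 * frac_heat_profile N s t x"
  shows "0 \<le> k x"
    and "k x \<le> C0 * t powr (- N / (2 * s))"
    and "norm x \<le> sqrt t \<Longrightarrow> t powr (- N / (2 * s)) / C0 \<le> k x"
proof -
  have "0 < t" using \<open>1 \<le> t\<close> by simp
  show "0 \<le> k x"
    using bounds[of x] frac_heat_profile_pos[OF \<open>0 < t\<close>, of N s x] \<open>0 < C0\<close>
    by (smt (verit) divide_pos_pos)
  show "k x \<le> C0 * t powr (- N / (2 * s))"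
    using bounds[of x] frac_heat_profile_le[of N s t x] \<open>0 < C0\<close>
    by (smt (verit) mult_left_mono)
  assume "norm x \<le> sqrt t"
  then have "frac_heat_profile N s t x = t powr (- N / (2 * s))"
    using assms sqrt_le_powr[of t s] by (intro frac_heat_profile_eq_on_ball) auto
  then show "t powr (- N / (2 * s)) / C0 \<le> k x"
    using bounds[of x] by simp
qed

theorem lemma2p6:
  fixes h :: "real \<Rightarrow> real^'n \<Rightarrow> real" and s C0 :: real
  assumes s_pos: "0 < s" and s_lt1: "s < 1" and C0: "C0 \<ge> 1"
    and meas: "\<And>t. t > 0 \<Longrightarrow> h t \<in> borel_measurable lborel"
    and at0_lower: "\<And>t. t > 0 \<Longrightarrow> h t 0 \<ge> (1 / C0) * t powr (- real CARD('n) / (2 * s))"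
    and at0_upper: "\<And>t. t > 0 \<Longrightarrow> h t 0 \<le> C0 * t powr (- real CARD('n) / (2 * s))"
    and lower: "\<And>t x. t > 0 \<Longrightarrow> x \<noteq> 0 \<Longrightarrow>
       h t x \<ge> (1 / C0) * min (t powr (- real CARD('n) / (2 * s)))
                                (t * norm x powr (- real CARD('n) - 2 * s))"
    and upper: "\<And>t x. t > 0 \<Longrightarrow> x \<noteq> 0 \<Longrightarrow>
       h t x \<le> C0 * min (t powr (- real CARD('n) / (2 * s)))
                          (t * norm x powr (- real CARD('n) - 2 * s))"
  shows "\<exists>C>0. \<forall>t>1. \<forall>z::real^'n. norm z \<le> sqrt t \<longrightarrow>
           mixed_heat_kernel h t z \<ge> C * t powr (- real CARD('n) / (2 * s))"
proof -
  let ?N = "real CARD('n)"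
  define C where "C = (4 * pi) powr (- ?N / 2) * exp (-1) * measure lborel (ball (0::real^'n) 1) / C0"
  have "C > 0"
    using C0 by (simp add: C_def content_ball_pos)
  have h_bounds: "frac_heat_profile ?N s t x / C0 \<le> h t x \<and> h t x \<le> C0 * frac_heat_profile ?N s t x"
    if "t > 0" for t and x :: "real^'n"
    using at0_lower[OF that] at0_upper[OF that] lower[OF that] upper[OF that]
    by (cases "x = 0") (simp_all add: frac_heat_profile_def)
  have "C * t powr (- ?N / (2 * s)) \<le> mixed_heat_kernel h t z" if "t > 1" "norm z \<le> sqrt t" for t z
  proof -
    have "t > 0" using that by simp
    have "0 \<le> h t \<xi>" "h t \<xi> \<le> C0 * t powr (- ?N / (2 * s))"
      "norm \<xi> \<le> sqrt t \<Longrightarrow> t powr (- ?N / (2 * s)) / C0 \<le> h t \<xi>" for \<xi>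
      using kernel_bounds_from_frac_heat_profile[OF s_pos _ _ _ _ h_bounds[OF \<open>t > 0\<close>]] s_lt1 C0 \<open>t > 1\<close>
      by auto
    then have "(4 * pi) powr (- ?N / 2) * exp (-1) * measure lborel (ball (0::real^'n) 1)
                 * (t powr (- ?N / (2 * s)) / C0) \<le> mixed_heat_kernel h t z"
      using \<open>norm z \<le> sqrt t\<close>
      by (rule mixed_heat_kernel_ge_parabolic_ball[where h = h and t = t, OF \<open>t > 0\<close> meas[OF \<open>t > 0\<close>]])
    then show ?thesis
      by (simp add: C_def)
  qed
  with \<open>C > 0\<close> show ?thesis
    by blast
qed

end
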